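(* In the uplink of the locally connected network with connectivity parameter $L$ and cell association constraint $|\mathcal C_i|\le N_c$, for any zero-forcing message passing decoding scheme and any set $\mathcal L\subseteq[K]$ of $L+1$ consecutive indices, at most $N_c$ messages $W_i$ with $i\in\mathcal L$ are decoded at base stations with indices in $\mathcal L$.
   Context: Network: $K$ base stations BS $1,\dots,K$ and $K$ mobile terminals MT $1,\dots,K$, single-antenna; the channel coefficient $H_{i,j}$ between MT $i$ and BS $j$ is zero iff $i\notin\{j,\dots,j+L\}$, nonzero coefficients generic (drawn from a continuous joint distribution). Uplink: BS $j$ receives $Y_j=\sum_iH_{i,j}X_i+Z_j$. MT $i$ has message $W_i$ and is associated with a set $\mathcal C_i\subseteq[K]$ of base stations, $|\mathcal C_i|\le N_c$. Zero-forcing message passing decoding: each message is decoded at at most one base station in its association set, and a decoded message is passed over the backhaul to the other base stations in its association set, which use it to cancel its interference; a base station decodes message $W_j$ only if, after removing the messages it received over the backhaul, its noiseless received signal depends on $W_j$ and on no other message. *)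

theory Defs
  imports Complex_Main
begin

text \<open>Indices of mobile terminals and base stations are 1..K.
  H i j is the channel coefficient between MT i and BS j; C i is the association
  set of MT i. A zero-forcing message passing decoding scheme is given by the
  ordered list of decoding steps (i, b): message W_i is decoded at BS b.
  At each step, BS b has received (over the backhaul, or decoded itself) every
  earlier-decoded message whose association set contains b; after cancelling
  those, the noiseless signal sum of H m b X_m must depend on W_i only, i.e.
  the set of remaining messages with nonzero coefficient at b is exactly {i}.\<close>

definition zfmp_scheme ::
  "nat \<Rightarrow> (nat \<Rightarrow> nat \<Rightarrow> real) \<Rightarrow> (nat \<Rightarrow> nat set) \<Rightarrow> (nat \<times> nat) list \<Rightarrow> bool" where
  "zfmp_scheme K H C steps \<longleftrightarrow>
     distinct (map fst steps) \<and>
     (\<forall>k < length steps.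
        fst (steps ! k) \<in> {1..K} \<and>
        snd (steps ! k) \<in> C (fst (steps ! k)) \<and>
        {m \<in> {1..K}. H m (snd (steps ! k)) \<noteq> 0}
          - {fst (steps ! k') | k'. k' < k \<and> snd (steps ! k) \<in> C (fst (steps ! k'))}
          = {fst (steps ! k)})"

end

theory Submission
  imports Defs
begin

text \<open>MT \<open>a + L\<close> is heard by every base station of the window \<open>{a..a+L}\<close>. A base
  station can only decode once the interference of every MT it hears has been removed, so each
  base station of the window that decodes anything belongs to the association set of MT \<open>a + L\<close>.
  Since a base station decodes at most one message, the decodings inside the window inject into
  \<open>C (a + L)\<close>, which has at most \<open>N\<^sub>c\<close> elements.\<close>

lemma zfmp_schemeD:
  assumes "zfmp_scheme K H C steps" "k < length steps" "steps ! k = (i, b)"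
  shows "i \<in> {1..K}" "b \<in> C i"
    and "{m \<in> {1..K}. H m b \<noteq> 0}
           - {fst (steps ! k') | k'. k' < k \<and> b \<in> C (fst (steps ! k'))} = {i}"
proof -
  have "fst (steps ! k) \<in> {1..K} \<and> snd (steps ! k) \<in> C (fst (steps ! k)) \<and>
        {m \<in> {1..K}. H m (snd (steps ! k)) \<noteq> 0}
          - {fst (steps ! k') | k'. k' < k \<and> snd (steps ! k) \<in> C (fst (steps ! k'))}
          = {fst (steps ! k)}"
    using assms(1,2) unfolding zfmp_scheme_def by blast
  then show "i \<in> {1..K}" "b \<in> C i"
    and "{m \<in> {1..K}. H m b \<noteq> 0}
           - {fst (steps ! k') | k'. k' < k \<and> b \<in> C (fst (steps ! k'))} = {i}"
    unfolding assms(3) by simp_all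
qed

lemma zfmp_interferer_decoded_earlier:
  assumes scheme: "zfmp_scheme K H C steps"
    and step: "k < length steps" "steps ! k = (i, b)"
    and interferer: "j \<in> {1..K}" "H j b \<noteq> 0" "j \<noteq> i"
  obtains k' where "k' < k" "fst (steps ! k') = j" "b \<in> C j"
proof -
  have "j \<notin> {m \<in> {1..K}. H m b \<noteq> 0}
          - {fst (steps ! k') | k'. k' < k \<and> b \<in> C (fst (steps ! k'))}"
    unfolding zfmp_schemeD(3)[OF scheme step] using interferer(3) by simp
  then show thesis using interferer(1,2) that by blast
qed

lemma zfmp_decoder_in_assoc:
  assumes scheme: "zfmp_scheme K H C steps"
    and decoded: "(i, b) \<in> set steps"
    and interferer: "j \<in> {1..K}" "H j b \<noteq> 0"
  shows "b \<in> C j"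
proof -
  obtain k where step: "k < length steps" "steps ! k = (i, b)"
    using decoded by (auto simp: in_set_conv_nth)
  show ?thesis
  proof (cases "j = i")
    case True
    then show ?thesis using zfmp_schemeD(2)[OF scheme step] by simp
  next
    case False
    then show ?thesis
      using zfmp_interferer_decoded_earlier[OF scheme step interferer] by blast
  qed
qed

lemma zfmp_decoder_decodes_once_ordered:
  assumes scheme: "zfmp_scheme K H C steps"
    and order: "k < k'" "k' < length steps"
    and steps: "steps ! k = (i, b)" "steps ! k' = (i', b)"
  shows "i' = i"
proof (rule ccontr)
  assume "i' \<noteq> i"
  moreover have "i' \<in> {1..K}" "H i' b \<noteq> 0"
    using zfmp_schemeD(3)[OF scheme order(2) steps(2)] by blast+
  ultimately obtain k'' where "k'' < k" "fst (steps ! k'') = i'"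
    using zfmp_interferer_decoded_earlier[OF scheme _ steps(1)] order by (metis order.strict_trans)
  moreover have "distinct (map fst steps)"
    using scheme by (simp add: zfmp_scheme_def)
  ultimately have "k'' = k'"
    using order steps(2) nth_eq_iff_index_eq[of "map fst steps" k'' k'] by simp
  then show False using \<open>k'' < k\<close> order(1) by simp
qed

lemma zfmp_decoder_decodes_once:
  assumes scheme: "zfmp_scheme K H C steps"
    and decoded: "(i, b) \<in> set steps" "(i', b) \<in> set steps"
  shows "i = i'"
proof -
  obtain k k' where k: "k < length steps" "steps ! k = (i, b)"
    and k': "k' < length steps" "steps ! k' = (i', b)"
    using decoded by (auto simp: in_set_conv_nth)
  show ?thesis
  proof (cases k k' rule: linorder_cases)
    case less
    show ?thesis using zfmp_decoder_decodes_once_ordered[OF scheme less k'(1) k(2) k'(2)] by simp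
  next
    case equal
    show ?thesis using k k' equal by simp
  next
    case greater
    show ?thesis using zfmp_decoder_decodes_once_ordered[OF scheme greater k(1) k'(2) k(2)] .
  qed
qed

lemma zfmp_card_decodings_at_le:
  assumes scheme: "zfmp_scheme K H C steps"
    and common_interferer: "j \<in> {1..K}" "\<forall>b\<in>B. H j b \<noteq> 0"
    and finite: "finite (C j)"
  shows "card {p \<in> set steps. snd p \<in> B} \<le> card (C j)"
proof (rule card_inj_on_le[OF _ _ finite])
  show "inj_on snd {p \<in> set steps. snd p \<in> B}"
    using zfmp_decoder_decodes_once[OF scheme] by (auto intro!: inj_onI)
  show "snd ` {p \<in> set steps. snd p \<in> B} \<subseteq> C j"
    using zfmp_decoder_in_assoc[OF scheme _ common_interferer(1)] common_interferer(2)
    by fastforce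
qed

theorem lemma2:
  fixes K L Nc a :: nat
    and H :: "nat \<Rightarrow> nat \<Rightarrow> real"
    and C :: "nat \<Rightarrow> nat set"
    and steps :: "(nat \<times> nat) list"
  assumes channel: "\<forall>i\<in>{1..K}. \<forall>j\<in>{1..K}. (H i j = 0 \<longleftrightarrow> i \<notin> {j..j+L})"
    and assoc: "\<forall>i\<in>{1..K}. C i \<subseteq> {1..K} \<and> card (C i) \<le> Nc"
    and scheme: "zfmp_scheme K H C steps"
    and window: "1 \<le> a" "a + L \<le> K"
  shows "card {i \<in> {a..a+L}. \<exists>b\<in>{a..a+L}. (i, b) \<in> set steps} \<le> Nc"
proof -
  let ?W = "{a..a+L}" and ?t = "a + L"
  let ?D = "{p \<in> set steps. snd p \<in> ?W}"
  have t: "?t \<in> {1..K}" using window by simp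
  have heard: "\<forall>b\<in>?W. H ?t b \<noteq> 0" using channel t window by auto
  have "finite (C ?t)" using assoc t finite_subset by blast
  have "{i \<in> ?W. \<exists>b\<in>?W. (i, b) \<in> set steps} \<subseteq> fst ` ?D" by force
  then have "card {i \<in> ?W. \<exists>b\<in>?W. (i, b) \<in> set steps} \<le> card (fst ` ?D)"
    by (simp add: card_mono)
  also have "\<dots> \<le> card ?D" by (rule card_image_le) simp
  also have "\<dots> \<le> card (C ?t)"
    using zfmp_card_decodings_at_le[OF scheme t heard \<open>finite (C ?t)\<close>] .
  also have "\<dots> \<le> Nc" using assoc t by blast
  finally show ?thesis .
qed

end
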